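(* The pair $(\alpha_\infty,\varphi_\infty)=(0,\varphi_\infty)$ satisfies $d_{A_\infty}^*\alpha_\infty-2\pi^{\mathrm{skew}}\bigl(i*[\Phi_\infty^*\wedge\varphi_\infty]\bigr)=0$.
   Context: $X$ is a compact Riemann surface, $\Theta$ a square root of $K_X$, $E=\Theta\oplus\Theta^*$ with hermitian metric $H=k\oplus k^{-1}$ for a hermitian metric $k$ on $\Theta$. Let $q\in H^0(K_X^2)$ have only simple zeros, $X^\times=X\setminus q^{-1}(0)$, and $\dot q\in H^0(K_X^2)$. In a local holomorphic frame $dz^{\pm1/2}$ of $\Theta^{\pm1}$ with $H=\mathrm{diag}(\kappa,\kappa^{-1})$, $q=f\,dz^2$, $\dot q=\dot f\,dz^2$, define on $X^\times$ \[ \Phi_\infty=\begin{pmatrix}0&|f|^{-1/2}\kappa^{-1}f\\|f|^{1/2}\kappa&0\end{pmatrix}dz,\qquad \varphi_\infty=\begin{pmatrix}0&\tfrac12|f|^{-1/2}\kappa^{-1}\dot f\\\tfrac12|f|^{1/2}\kappa\,\dot f/f&0\end{pmatrix}dz \] (globally, $\Phi_\infty=\begin{pmatrix}0&|q|_k^{-1/2}q\\|q|_k^{1/2}&0\end{pmatrix}$ and $\varphi_\infty=\begin{pmatrix}0&\frac12|q|_k^{-1/2}\dot q\\\frac12|q|_k^{1/2}\dot q/q&0\end{pmatrix}$, $|q|_k$ the norm of $q$ induced by $k$). $A_\infty$ is the flat unitary connection of the limiting configuration $(A_\infty,\Phi_\infty)$ (the precise form is irrelevant here since $\alpha_\infty=0$).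 $\Phi_\infty^*$ is the $H$-adjoint, $*$ the Hodge star of a conformal metric on $X$, and $\pi^{\mathrm{skew}}:\mathfrak{sl}(E)\to\mathfrak{su}(E)$ the orthogonal projection onto $H$-skew-hermitian endomorphisms. *)

theory Defs
  imports "HOL-Analysis.Analysis"
begin

(* Pointwise model in a local holomorphic frame dz^{1/2}, dz^{-1/2} and coordinate z = x + i y. *)

type_synonym cmat = "complex^2^2"

definition mat2 :: "complex \<Rightarrow> complex \<Rightarrow> complex \<Rightarrow> complex \<Rightarrow> cmat" where
  "mat2 a b c d = vector [vector [a, b], vector [c, d]]"

definition ctrans :: "cmat \<Rightarrow> cmat" where
  "ctrans A = (\<chi> i j. cnj (A $ j $ i))"

(* adjoint with respect to the hermitian metric with matrix H *)
definition Hadj :: "cmat \<Rightarrow> cmat \<Rightarrow> cmat" where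
  "Hadj H A = matrix_inv H ** ctrans A ** H"

definition pi_skew :: "cmat \<Rightarrow> cmat \<Rightarrow> cmat" where
  "pi_skew H A = (1/2::real) *\<^sub>R (A - Hadj H A)"

definition cscale :: "complex \<Rightarrow> cmat \<Rightarrow> cmat" where
  "cscale c A = (\<chi> i j. c * A $ i $ j)"

(* matrix-valued 1-form a dz + b dzbar, stored as (a, b) *)
type_synonym mform1 = "cmat \<times> cmat"

(* H-adjoint of a matrix-valued 1-form: (a dz + b dzbar)^* = b^* dz + a^* dzbar *)
definition form_adj :: "cmat \<Rightarrow> mform1 \<Rightarrow> mform1" where
  "form_adj H w = (Hadj H (snd w), Hadj H (fst w))"

(* [alpha \<and> beta] = alpha\<and>beta + beta\<and>alpha, returned as its coefficient
   w.r.t. dx\<and>dy, using dz\<and>dzbar = -2i dx\<and>dy *)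
definition wedge_bracket :: "mform1 \<Rightarrow> mform1 \<Rightarrow> cmat" where
  "wedge_bracket v w =
     cscale (-2 * \<i>) (fst v ** snd w - snd v ** fst w + fst w ** snd v - snd w ** fst v)"

(* Hodge star of the 2-form c dx\<and>dy for the conformal metric lam (dx^2+dy^2) *)
definition hodge2 :: "real \<Rightarrow> cmat \<Rightarrow> cmat" where
  "hodge2 lam c = (1 / lam) *\<^sub>R c"

end

theory Submission
  imports Defs
begin

text \<open>In the local frame, \<open>\<Phi>\<^sub>\<infinity> = A dz\<close> with \<open>A\<close> off-diagonal, and the metric is adapted to it:
  \<open>\<bar>A\<^sub>2\<^sub>1\<bar> = \<kappa>\<^sup>2 \<bar>A\<^sub>1\<^sub>2\<bar>\<close> (both equal \<open>\<kappa>\<surd>\<bar>f\<bar>\<close>), which is exactly the condition for \<open>A\<close> to commute with its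
  \<open>H\<close>-adjoint.  Moreover \<open>\<phi>\<^sub>\<infinity> = (fdot / 2f) \<Phi>\<^sub>\<infinity>\<close>, so \<open>[\<Phi>\<^sub>\<infinity>\<^sup>* \<and> \<phi>\<^sub>\<infinity>]\<close> is a multiple of
  \<open>[A\<^sup>*, A] = 0\<close> and the whole expression vanishes.\<close>

lemma matrix_inv_eqI:
  fixes A :: "'a::semiring_1^'n^'m"
  assumes "A ** B = mat 1" and "B ** A = mat 1"
  shows "matrix_inv A = B"
proof -
  have "\<exists>C. A ** C = mat 1 \<and> C ** A = mat 1"
    using assms by blast
  then have inv: "A ** matrix_inv A = mat 1 \<and> matrix_inv A ** A = mat 1"
    unfolding matrix_inv_def by (rule someI_ex)
  have "matrix_inv A = (B ** A) ** matrix_inv A"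
    using assms by simp
  also have "\<dots> = B"
    using inv by (simp flip: matrix_mul_assoc)
  finally show ?thesis .
qed

lemma ctrans_zero [simp]: "ctrans 0 = 0"
  by (simp add: ctrans_def vec_eq_iff)

lemma Hadj_zero [simp]: "Hadj H 0 = 0"
  by (simp add: Hadj_def)

lemma pi_skew_zero [simp]: "pi_skew H 0 = 0"
  by (simp add: pi_skew_def)

lemma cscale_zero [simp]: "cscale c 0 = 0"
  by (simp add: cscale_def vec_eq_iff)

lemma hodge2_zero [simp]: "hodge2 lam 0 = 0"
  by (simp add: hodge2_def)

lemma cscale_diff: "cscale c (A - B) = cscale c A - cscale c B"
  by (simp add: cscale_def vec_eq_iff right_diff_distrib)

lemma cscale_matrix_mult_left: "cscale c A ** B = cscale c (A ** B)"
  by (simp add: cscale_def matrix_matrix_mult_def vec_eq_iff sum_distrib_left mult.assoc)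

lemma cscale_matrix_mult_right: "A ** cscale c B = cscale c (A ** B)"
  by (simp add: cscale_def matrix_matrix_mult_def vec_eq_iff sum_distrib_left mult_ac)

lemma wedge_bracket_form_adj_dz:
  "wedge_bracket (form_adj H (A, 0)) (B, 0) = cscale (-2 * \<i>) (B ** Hadj H A - Hadj H A ** B)"
  by (simp add: wedge_bracket_def form_adj_def)

lemma wedge_bracket_form_adj_multiple_eq_zero:
  assumes normal: "Hadj H A ** A = A ** Hadj H A"
  shows "wedge_bracket (form_adj H (A, 0)) (cscale c A, 0) = 0"
  by (simp add: wedge_bracket_form_adj_dz cscale_matrix_mult_left cscale_matrix_mult_right
      normal flip: cscale_diff)

lemma mat2_nth:
  "mat2 a b c d $ i $ j = (if i = 1 then (if j = 1 then a else b) else (if j = 1 then c else d))"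
proof -
  have "i = 1 \<or> i = 2" and "j = 1 \<or> j = 2"
    using exhaust_2 by auto
  then show ?thesis
    by (auto simp: mat2_def)
qed

lemma mat2_eq_iff: "mat2 a b c d = mat2 a' b' c' d' \<longleftrightarrow> a = a' \<and> b = b' \<and> c = c' \<and> d = d'"
  by (simp add: vec_eq_iff forall_2 mat2_nth)

lemma mat2_mult:
  "mat2 a b c d ** mat2 a' b' c' d' =
     mat2 (a * a' + b * c') (a * b' + b * d') (c * a' + d * c') (c * b' + d * d')"
  by (auto simp: vec_eq_iff matrix_matrix_mult_def UNIV_2 mat2_nth)

lemma mat_one_eq_mat2: "(mat 1 :: cmat) = mat2 1 0 0 1"
  by (simp add: vec_eq_iff forall_2 mat_def mat2_nth)

lemma cscale_mat2: "cscale s (mat2 a b c d) = mat2 (s * a) (s * b) (s * c) (s * d)"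
  by (simp add: vec_eq_iff forall_2 cscale_def mat2_nth)

lemma ctrans_mat2: "ctrans (mat2 a b c d) = mat2 (cnj a) (cnj c) (cnj b) (cnj d)"
  by (auto simp: vec_eq_iff ctrans_def mat2_nth)

lemma matrix_inv_diag:
  assumes "a \<noteq> 0" and "d \<noteq> 0"
  shows "matrix_inv (mat2 a 0 0 d) = mat2 (1 / a) 0 0 (1 / d)"
  using assms by (intro matrix_inv_eqI) (simp_all add: mat2_mult mat_one_eq_mat2)

lemma Hadj_diag_offdiag:
  assumes "a \<noteq> 0" and "d \<noteq> 0"
  shows "Hadj (mat2 a 0 0 d) (mat2 0 p q 0) = mat2 0 (cnj q * d / a) (cnj p * a / d) 0"
  using assms by (simp add: Hadj_def matrix_inv_diag ctrans_mat2 mat2_mult)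

lemma offdiag_Hadj_commute:
  fixes k :: real
  assumes "k \<noteq> 0" and "cmod q = k\<^sup>2 * cmod p"
  shows "Hadj (mat2 (of_real k) 0 0 (of_real (1 / k))) (mat2 0 p q 0) ** mat2 0 p q 0
       = mat2 0 p q 0 ** Hadj (mat2 (of_real k) 0 0 (of_real (1 / k))) (mat2 0 p q 0)"
proof -
  have "cnj q * q = of_real ((cmod q)\<^sup>2)"
    by (metis complex_norm_square mult.commute)
  also have "\<dots> = of_real k ^ 4 * of_real ((cmod p)\<^sup>2)"
    by (simp add: assms(2) power_mult_distrib flip: power_mult)
  also have "\<dots> = of_real k ^ 4 * (p * cnj p)"
    by (simp only: complex_norm_square)
  finally show ?thesis
    using assms(1)
    by (simp add: Hadj_diag_offdiag mat2_mult mat2_eq_iff field_simps power4_eq_xxxx)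
qed

theorem lemma3p11:
  fixes f fdot :: complex and kappa lam :: real
  assumes "f \<noteq> 0" and "kappa > 0" and "lam > 0"
  shows "let H = mat2 (of_real kappa) 0 0 (of_real (1 / kappa));
             Phi = (mat2 0 (of_real (1 / (sqrt (cmod f) * kappa)) * f)
                          (of_real (sqrt (cmod f) * kappa)) 0, 0::cmat);
             phi = (mat2 0 (of_real (1 / (2 * sqrt (cmod f) * kappa)) * fdot)
                          (of_real (sqrt (cmod f) * kappa / 2) * fdot / f) 0, 0::cmat)
         in (0::cmat) - 2 *\<^sub>R pi_skew H (cscale \<i> (hodge2 lam (wedge_bracket (form_adj H Phi) phi))) = 0"
proof -
  define s where "s = sqrt (cmod f) * kappa"
  define A where "A = mat2 0 (of_real (1 / s) * f) (of_real s) 0"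
  define H :: cmat where "H = mat2 (of_real kappa) 0 0 (of_real (1 / kappa))"
  have s_pos: "s > 0"
    using assms by (simp add: s_def)
  have "sqrt (cmod f) > 0"
    using assms(1) by simp
  then have "cmod (of_real s) = kappa\<^sup>2 * cmod (of_real (1 / s) * f)"
    using assms(2) by (simp add: s_def norm_mult norm_divide field_simps power2_eq_square)
  then have normal: "Hadj H A ** A = A ** Hadj H A"
    using assms(2) unfolding H_def A_def by (intro offdiag_Hadj_commute) auto
  have Phi_eq: "mat2 0 (of_real (1 / (sqrt (cmod f) * kappa)) * f) (of_real (sqrt (cmod f) * kappa)) 0 = A"
    by (simp add: A_def s_def)
  have phi_eq: "mat2 0 (of_real (1 / (2 * sqrt (cmod f) * kappa)) * fdot)
                  (of_real (sqrt (cmod f) * kappa / 2) * fdot / f) 0 = cscale (fdot / (2 * f)) A"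
    using assms(1) s_pos by (simp add: A_def s_def cscale_mat2 mat2_eq_iff field_simps)
  show ?thesis
    unfolding Let_def Phi_eq phi_eq H_def[symmetric]
    by (simp add: wedge_bracket_form_adj_multiple_eq_zero[OF normal])
qed

end
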